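(* Let $A=\{a_1,\ldots,a_n\}$ and $B=\{b_1,\ldots,b_m\}$ be finite point sets in $\mathbb{R}^2$ with $m\le n$, and let $\mathcal{D}_{B,A}$ be their partial-matching subdivision. Then every edge of $\mathcal{D}_{B,A}$ has a normal vector of the form $a_j-a_i$ for suitable $i\neq j\in\{1,\ldots,n\}$.
   Context: An injective assignment (matching) is an injective map $\pi:B\to A$; write $a_{\pi(i)}$ for the point assigned to $b_i$. For a translation $t\in\mathbb{R}^2$ its cost is $f(\pi,t)=\sum_{i=1}^m\|b_i+t-a_{\pi(i)}\|^2=c_\pi+\langle t,d_\pi\rangle+m\|t\|^2$, where $c_\pi=\sum_{i=1}^m\|b_i-a_{\pi(i)}\|^2$ and $d_\pi=2\sum_{i=1}^m(b_i-a_{\pi(i)})$. The partial-matching subdivision $\mathcal{D}_{B,A}$ is the subdivision of the plane in which two translations $t_1,t_2$ lie in the same region iff the set of injections minimizing $f(\cdot,t)$ is the same at $t_1$ and $t_2$; equivalently, it is the minimization diagram (projection onto the $t$-plane) of the lower envelope $\mathcal{E}_{B,A}(t)=\min_{\pi}(c_\pi+\langle t,d_\pi\rangle)$ of finitely many planes. It is a convex subdivision of the plane into convex polygonal regions (open two-dimensional faces), edges and vertices. *)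

theory Defs
  imports "HOL-Analysis.Analysis"
begin

text \<open>Points are indexed families: A = a 0, ..., a (n-1), B = b 0, ..., b (m-1) in R^2.
  Injective assignments B -> A are represented as extensional injections {..<m} -> {..<n}.\<close>

definition injections :: "nat \<Rightarrow> nat \<Rightarrow> (nat \<Rightarrow> nat) set" where
  "injections m n = {\<pi>. \<pi> \<in> {..<m} \<rightarrow>\<^sub>E {..<n} \<and> inj_on \<pi> {..<m}}"

definition match_cost ::
  "(nat \<Rightarrow> real^2) \<Rightarrow> (nat \<Rightarrow> real^2) \<Rightarrow> nat \<Rightarrow> (nat \<Rightarrow> nat) \<Rightarrow> real^2 \<Rightarrow> real" where
  "match_cost a b m \<pi> t = (\<Sum>i<m. (norm (b i + t - a (\<pi> i)))\<^sup>2)"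

definition optimal_matchings ::
  "(nat \<Rightarrow> real^2) \<Rightarrow> (nat \<Rightarrow> real^2) \<Rightarrow> nat \<Rightarrow> nat \<Rightarrow> real^2 \<Rightarrow> (nat \<Rightarrow> nat) set" where
  "optimal_matchings a b m n t =
     {\<pi> \<in> injections m n. \<forall>\<sigma> \<in> injections m n. match_cost a b m \<pi> t \<le> match_cost a b m \<sigma> t}"

definition pm_face ::
  "(nat \<Rightarrow> real^2) \<Rightarrow> (nat \<Rightarrow> real^2) \<Rightarrow> nat \<Rightarrow> nat \<Rightarrow> (real^2) set \<Rightarrow> bool" where
  "pm_face a b m n F \<longleftrightarrow>
     (\<exists>t0. F = {t. optimal_matchings a b m n t = optimal_matchings a b m n t0})"

definition pm_edge ::
  "(nat \<Rightarrow> real^2) \<Rightarrow> (nat \<Rightarrow> real^2) \<Rightarrow> nat \<Rightarrow> nat \<Rightarrow> (real^2) set \<Rightarrow> bool" where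
  "pm_edge a b m n E \<longleftrightarrow>
     pm_face a b m n E \<and> collinear E \<and> (\<exists>p\<in>E. \<exists>q\<in>E. p \<noteq> q)"

definition normal_vector :: "real^2 \<Rightarrow> (real^2) set \<Rightarrow> bool" where
  "normal_vector v E \<longleftrightarrow> v \<noteq> 0 \<and> (\<forall>p\<in>E. \<forall>q\<in>E. (p - q) \<bullet> v = 0)"

end

theory Submission
  imports Defs
begin

(* At translation t the cost of a matching \<pi> is c\<^sub>\<pi> + 2 t \<bullet> (\<Sum>b - \<Sum>a\<circ>\<pi>) + m |t|^2, so two
   matchings whose costs agree along an edge E have target sums \<Sum>a\<circ>\<pi> differing by a normal
   of E. If all matchings optimal at a point p of E had the same target sum, they would have
   identical cost functions and remain the only optimal matchings near p, so E would contain
   an open set. Hence there are optimal \<pi>, \<sigma> with different target sums; swapping \<pi> for \<sigma>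
   along the alternating path that starts at a point a_x used by \<pi> but not by \<sigma> gives a
   third optimal matching \<tau> with \<Sum>a\<circ>\<pi> - \<Sum>a\<circ>\<tau> = a_x - a_y. *)

definition target_sum :: "(nat \<Rightarrow> real^2) \<Rightarrow> nat \<Rightarrow> (nat \<Rightarrow> nat) \<Rightarrow> real^2" where
  "target_sum a m \<pi> = (\<Sum>i<m. a (\<pi> i))"

lemma match_cost_expand:
  "match_cost a b m \<pi> t = match_cost a b m \<pi> 0
     + 2 * (t \<bullet> ((\<Sum>i<m. b i) - target_sum a m \<pi>)) + real m * (norm t)\<^sup>2"
proof -
  have "(norm (b i + t - a (\<pi> i)))\<^sup>2 = (norm (b i - a (\<pi> i)))\<^sup>2
      + 2 * (t \<bullet> (b i - a (\<pi> i))) + (norm t)\<^sup>2" for i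
    by (simp add: power2_norm_eq_inner algebra_simps inner_commute)
  then show ?thesis
    by (simp add: match_cost_def target_sum_def sum.distrib inner_sum_right sum_distrib_left
        sum_subtractf inner_diff_right)
qed

lemma match_cost_diff:
  "match_cost a b m \<pi> t - match_cost a b m \<sigma> t
     = match_cost a b m \<pi> 0 - match_cost a b m \<sigma> 0
       + 2 * (t \<bullet> (target_sum a m \<sigma> - target_sum a m \<pi>))"
  by (subst (1 2) match_cost_expand) (simp add: inner_diff_right algebra_simps)

lemma match_cost_eq_imp_orthogonal:
  assumes "match_cost a b m \<pi> s = match_cost a b m \<tau> s" "match_cost a b m \<pi> t = match_cost a b m \<tau> t"
  shows "(s - t) \<bullet> (target_sum a m \<pi> - target_sum a m \<tau>) = 0"
  using match_cost_diff[of a b m \<pi> s \<tau>] match_cost_diff[of a b m \<pi> t \<tau>] assms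
  by (simp add: inner_diff_left inner_diff_right)

lemma tendsto_match_cost: "((match_cost a b m \<pi>) \<longlongrightarrow> match_cost a b m \<pi> p) (nhds p)"
  unfolding match_cost_def by (intro tendsto_intros filterlim_ident)

lemma finite_injections: "finite (injections m n)"
proof (rule finite_subset)
  show "injections m n \<subseteq> {..<m} \<rightarrow>\<^sub>E {..<n}" by (auto simp: injections_def)
qed (auto intro: finite_PiE)

lemma optimal_matchings_nonempty:
  assumes "m \<le> n" shows "optimal_matchings a b m n t \<noteq> {}"
proof -
  have "restrict id {..<m} \<in> injections m n"
    using assms by (auto simp: injections_def restrict_PiE_iff)
  then obtain \<pi> where "is_arg_min (\<lambda>\<pi>. match_cost a b m \<pi> t) (\<lambda>\<pi>. \<pi> \<in> injections m n) \<pi>"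
    using ex_is_arg_min_if_finite[OF finite_injections] by blast
  then show ?thesis by (auto simp: optimal_matchings_def is_arg_min_def not_less)
qed

lemma optimal_matchings_cost_eq:
  assumes "\<pi> \<in> optimal_matchings a b m n t" "\<sigma> \<in> optimal_matchings a b m n t"
  shows "match_cost a b m \<pi> t = match_cost a b m \<sigma> t"
  using assms by (auto simp: optimal_matchings_def intro: order_antisym)

lemma eventually_optimal_matchings_subset:
  assumes "m \<le> n"
  shows "\<forall>\<^sub>F t in nhds p. optimal_matchings a b m n t \<subseteq> optimal_matchings a b m n p"
proof -
  let ?f = "match_cost a b m" and ?OPT = "optimal_matchings a b m n"
  obtain \<pi> where \<pi>: "\<pi> \<in> ?OPT p" using optimal_matchings_nonempty[OF assms] by blast
  have "\<forall>\<^sub>F t in nhds p. \<forall>\<sigma> \<in> injections m n - ?OPT p. 0 < ?f \<sigma> t - ?f \<pi> t"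
  proof (intro eventually_ball_finite ballI)
    fix \<sigma> assume \<sigma>: "\<sigma> \<in> injections m n - ?OPT p"
    then obtain \<rho> where "\<rho> \<in> injections m n" "?f \<rho> p < ?f \<sigma> p"
      by (auto simp: optimal_matchings_def not_le)
    with \<pi> have "0 < ?f \<sigma> p - ?f \<pi> p" by (force simp: optimal_matchings_def)
    then show "\<forall>\<^sub>F t in nhds p. 0 < ?f \<sigma> t - ?f \<pi> t"
      by (rule order_tendstoD(1)[OF tendsto_diff[OF tendsto_match_cost tendsto_match_cost]])
  qed (simp add: finite_injections)
  then show ?thesis
  proof (rule eventually_mono, intro subsetI)
    fix t \<rho>
    assume less: "\<forall>\<sigma> \<in> injections m n - ?OPT p. 0 < ?f \<sigma> t - ?f \<pi> t" and "\<rho> \<in> ?OPT t"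
    then have "\<rho> \<in> injections m n" "?f \<rho> t \<le> ?f \<pi> t"
      using \<pi> by (auto simp: optimal_matchings_def)
    then show "\<rho> \<in> ?OPT p" using less by (meson DiffI linorder_not_le diff_gt_0_iff_gt)
  qed
qed

lemma eventually_optimal_matchings_eq:
  assumes "m \<le> n"
    and same_sum: "\<forall>\<pi>\<in>optimal_matchings a b m n p. \<forall>\<sigma>\<in>optimal_matchings a b m n p.
                     target_sum a m \<pi> = target_sum a m \<sigma>"
  shows "\<forall>\<^sub>F t in nhds p. optimal_matchings a b m n t = optimal_matchings a b m n p"
  using eventually_optimal_matchings_subset[OF assms(1)]
proof (rule eventually_mono)
  let ?f = "match_cost a b m" and ?OPT = "optimal_matchings a b m n"
  fix t assume sub: "?OPT t \<subseteq> ?OPT p"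
  obtain \<rho> where \<rho>: "\<rho> \<in> ?OPT t" using optimal_matchings_nonempty[OF assms(1)] by blast
  have "\<pi> \<in> ?OPT t" if \<pi>: "\<pi> \<in> ?OPT p" for \<pi>
  proof -
    have "target_sum a m \<rho> = target_sum a m \<pi>" using same_sum \<pi> \<rho> sub by blast
    then have "?f \<pi> t - ?f \<rho> t = ?f \<pi> p - ?f \<rho> p"
      using match_cost_diff[of a b m \<pi> t \<rho>] match_cost_diff[of a b m \<pi> p \<rho>] by simp
    also have "\<dots> = 0" using optimal_matchings_cost_eq[OF \<pi>] \<rho> sub by auto
    finally have "?f \<pi> t = ?f \<rho> t" by simp
    with \<rho> \<pi> show ?thesis by (simp add: optimal_matchings_def)
  qed
  with sub show "?OPT t = ?OPT p" by blast
qed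

lemma pm_face_eq:
  assumes "pm_face a b m n E" "p \<in> E"
  shows "E = {t. optimal_matchings a b m n t = optimal_matchings a b m n p}"
  using assms by (auto simp: pm_face_def)

lemma pm_edge_target_sums_differ:
  assumes "m \<le> n" "pm_edge a b m n E" "p \<in> E"
  shows "\<exists>\<pi>\<in>optimal_matchings a b m n p. \<exists>\<sigma>\<in>optimal_matchings a b m n p.
           target_sum a m \<pi> \<noteq> target_sum a m \<sigma>"
proof (rule ccontr)
  assume "\<not> ?thesis"
  then have "\<forall>\<^sub>F t in nhds p. optimal_matchings a b m n t = optimal_matchings a b m n p"
    by (intro eventually_optimal_matchings_eq[OF assms(1)]) blast
  moreover have "E = {t. optimal_matchings a b m n t = optimal_matchings a b m n p}"
    using pm_face_eq assms(2,3) by (auto simp: pm_edge_def)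
  ultimately have "\<forall>\<^sub>F t in nhds p. t \<in> E" by simp
  then obtain S where S: "open S" "p \<in> S" "S \<subseteq> E"
    by (auto simp: eventually_nhds)
  then have "aff_dim S = 2" using aff_dim_open[of S] by auto
  moreover have "collinear S"
    using S assms(2) by (auto simp: pm_edge_def intro: collinear_subset)
  ultimately show False by (simp add: collinear_aff_dim)
qed

lemma target_sum_eq_sum_image:
  assumes "\<pi> \<in> injections m n"
  shows "target_sum a m \<pi> = sum a (\<pi> ` {..<m})"
  using assms by (simp add: target_sum_def injections_def sum.reindex)

lemma sum_diff_eq_of_singleton_diffs:
  fixes f :: "'a \<Rightarrow> 'b::ab_group_add"
  assumes "finite A" "finite B" "A - B = {x}" "B - A = {y}"
  shows "sum f A - sum f B = f x - f y"
proof -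
  have "x \<in> A" "A - {x} = A \<inter> B" "y \<in> B" "B - {y} = A \<inter> B"
    using assms(3,4) by blast+
  then have "sum f A = f x + sum f (A \<inter> B)" "sum f B = f y + sum f (A \<inter> B)"
    using sum.remove[OF assms(1), of x f] sum.remove[OF assms(2), of y f] by simp_all
  then show ?thesis by simp
qed

definition splice :: "nat \<Rightarrow> nat set \<Rightarrow> (nat \<Rightarrow> nat) \<Rightarrow> (nat \<Rightarrow> nat) \<Rightarrow> nat \<Rightarrow> nat" where
  "splice m C \<sigma> \<pi> = restrict (\<lambda>i. if i \<in> C then \<sigma> i else \<pi> i) {..<m}"

lemma splice_in_injections:
  assumes "\<pi> \<in> injections m n" "\<sigma> \<in> injections m n"
    and "\<forall>i\<in>C. \<forall>k<m. k \<notin> C \<longrightarrow> \<sigma> i \<noteq> \<pi> k"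
  shows "splice m C \<sigma> \<pi> \<in> injections m n"
proof -
  have "splice m C \<sigma> \<pi> \<in> {..<m} \<rightarrow>\<^sub>E {..<n}"
    using assms(1,2) by (auto simp: splice_def injections_def restrict_PiE_iff PiE_iff)
  moreover have "inj_on (splice m C \<sigma> \<pi>) {..<m}"
  proof (rule inj_onI)
    fix i k assume ik: "i \<in> {..<m}" "k \<in> {..<m}" "splice m C \<sigma> \<pi> i = splice m C \<sigma> \<pi> k"
    have "inj_on \<pi> {..<m}" "inj_on \<sigma> {..<m}" using assms(1,2) by (simp_all add: injections_def)
    with ik assms(3) show "i = k"
      by (cases "i \<in> C"; cases "k \<in> C") (fastforce simp: splice_def dest: inj_onD)+
  qed
  ultimately show ?thesis by (simp add: injections_def)
qed

lemma match_cost_splice: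
  "match_cost a b m (splice m C \<sigma> \<pi>) t + match_cost a b m (splice m C \<pi> \<sigma>) t
     = match_cost a b m \<pi> t + match_cost a b m \<sigma> t"
  unfolding match_cost_def sum.distrib[symmetric] by (rule sum.cong) (auto simp: splice_def)

lemma target_sum_splice:
  assumes "C \<subseteq> {..<m}"
  shows "target_sum a m \<pi> - target_sum a m (splice m C \<sigma> \<pi>)
           = (\<Sum>i\<in>C. a (\<pi> i)) - (\<Sum>i\<in>C. a (\<sigma> i))"
proof -
  have split: "target_sum a m \<rho> = (\<Sum>i\<in>{..<m} - C. a (\<rho> i)) + (\<Sum>i\<in>C. a (\<rho> i))" for \<rho>
    unfolding target_sum_def using assms by (rule sum.subset_diff) simp
  have "(\<Sum>i\<in>{..<m} - C. a (splice m C \<sigma> \<pi> i)) = (\<Sum>i\<in>{..<m} - C. a (\<pi> i))"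
    by (rule sum.cong) (auto simp: splice_def)
  moreover have "(\<Sum>i\<in>C. a (splice m C \<sigma> \<pi> i)) = (\<Sum>i\<in>C. a (\<sigma> i))"
    by (rule sum.cong) (use assms in \<open>auto simp: splice_def\<close>)
  ultimately
  show ?thesis using split[of \<pi>] split[of "splice m C \<sigma> \<pi>"] by simp
qed

lemma alternating_component:
  assumes \<pi>: "\<pi> \<in> injections m n" and \<sigma>: "\<sigma> \<in> injections m n"
    and i0: "i0 < m" "\<pi> i0 \<notin> \<sigma> ` {..<m}"
  obtains C y where "C \<subseteq> {..<m}"
    "\<forall>i\<in>C. \<forall>k<m. k \<notin> C \<longrightarrow> \<sigma> i \<noteq> \<pi> k" "\<forall>i\<in>C. \<forall>k<m. k \<notin> C \<longrightarrow> \<pi> i \<noteq> \<sigma> k"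
    "\<pi> ` C - \<sigma> ` C = {\<pi> i0}" "\<sigma> ` C - \<pi> ` C = {y}"
proof -
  have inj: "inj_on \<pi> {..<m}" "inj_on \<sigma> {..<m}" using \<pi> \<sigma> by (simp_all add: injections_def)
  define R where "R = {(i, k). i < m \<and> k < m \<and> \<sigma> i = \<pi> k}"
  define C where "C = {k. (i0, k) \<in> R\<^sup>*}"
  have CM: "C \<subseteq> {..<m}"
  proof
    fix k assume "k \<in> C"
    then have "(i0, k) \<in> R\<^sup>*" by (simp add: C_def)
    then show "k \<in> {..<m}" by (cases rule: rtranclE) (use i0 in \<open>auto simp: R_def\<close>)
  qed
  have closed: "\<forall>i\<in>C. \<forall>k<m. k \<notin> C \<longrightarrow> \<sigma> i \<noteq> \<pi> k"
    using CM by (auto simp: C_def R_def intro: rtrancl_into_rtrancl)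
  have pred: "\<exists>i\<in>C. \<sigma> i = \<pi> k" if "k \<in> C" "k \<noteq> i0" for k
  proof -
    have "(i0, k) \<in> R\<^sup>*" using that by (simp add: C_def)
    then show ?thesis by (cases rule: rtranclE) (use that in \<open>auto simp: R_def C_def\<close>)
  qed
  have diff_\<pi>: "\<pi> ` C - \<sigma> ` C = {\<pi> i0}"
  proof
    show "\<pi> ` C - \<sigma> ` C \<subseteq> {\<pi> i0}"
    proof clarify
      fix k assume "k \<in> C" "\<pi> k \<notin> \<sigma> ` C"
      then show "\<pi> k = \<pi> i0" using pred[of k] by (metis image_eqI)
    qed
    show "{\<pi> i0} \<subseteq> \<pi> ` C - \<sigma> ` C" using i0 CM by (auto simp: C_def)
  qed
  have "card (\<pi> ` C) = card (\<sigma> ` C)"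
    using card_image[OF inj_on_subset[OF inj(1) CM]] card_image[OF inj_on_subset[OF inj(2) CM]] by simp
  then have "card (\<sigma> ` C - \<pi> ` C) = card (\<pi> ` C - \<sigma> ` C)"
    using CM finite_subset[OF CM] by (simp add: card_Diff_subset_Int Int_commute)
  then have "card (\<sigma> ` C - \<pi> ` C) = 1" using diff_\<pi> by simp
  then obtain y where diff_\<sigma>: "\<sigma> ` C - \<pi> ` C = {y}" by (rule card_1_singletonE)
  have closed': "\<forall>i\<in>C. \<forall>k<m. k \<notin> C \<longrightarrow> \<pi> i \<noteq> \<sigma> k"
  proof (intro ballI allI impI notI)
    fix i k assume "i \<in> C" "k < m" "k \<notin> C" and eq: "\<pi> i = \<sigma> k"
    then have "\<pi> i \<noteq> \<pi> i0" using i0(2) by (metis image_eqI lessThan_iff)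
    then have "\<pi> i \<in> \<sigma> ` C" using diff_\<pi> \<open>i \<in> C\<close> by blast
    then obtain j where "j \<in> C" "\<sigma> j = \<sigma> k" using eq by auto
    then show False using inj_onD[OF inj(2)] CM \<open>k < m\<close> \<open>k \<notin> C\<close> by blast
  qed
  from CM closed closed' diff_\<pi> diff_\<sigma> show thesis by (rule that)
qed

lemma exchange_optimal_matching:
  assumes \<pi>: "\<pi> \<in> optimal_matchings a b m n p" and \<sigma>: "\<sigma> \<in> optimal_matchings a b m n p"
    and i0: "i0 < m" "\<pi> i0 \<notin> \<sigma> ` {..<m}"
  obtains \<tau> y where "\<tau> \<in> optimal_matchings a b m n p" "y \<in> \<sigma> ` {..<m}"
    "target_sum a m \<pi> - target_sum a m \<tau> = a (\<pi> i0) - a y"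
proof -
  let ?f = "match_cost a b m"
  have inj: "\<pi> \<in> injections m n" "\<sigma> \<in> injections m n"
    using \<pi> \<sigma> by (simp_all add: optimal_matchings_def)
  obtain C y where C: "C \<subseteq> {..<m}"
    "\<forall>i\<in>C. \<forall>k<m. k \<notin> C \<longrightarrow> \<sigma> i \<noteq> \<pi> k" "\<forall>i\<in>C. \<forall>k<m. k \<notin> C \<longrightarrow> \<pi> i \<noteq> \<sigma> k"
    "\<pi> ` C - \<sigma> ` C = {\<pi> i0}" "\<sigma> ` C - \<pi> ` C = {y}"
    using alternating_component[OF inj i0] by blast
  let ?\<tau> = "splice m C \<sigma> \<pi>" and ?\<pi>' = "splice m C \<pi> \<sigma>"
  have "?\<tau> \<in> injections m n" "?\<pi>' \<in> injections m n"
    using splice_in_injections inj C(2,3) by blast+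
  then have "?f \<pi> p \<le> ?f ?\<tau> p" "?f \<pi> p \<le> ?f ?\<pi>' p" "?f \<pi> p = ?f \<sigma> p"
    using \<pi> optimal_matchings_cost_eq[OF \<pi> \<sigma>] by (auto simp: optimal_matchings_def)
  then have "?f ?\<tau> p = ?f \<pi> p" using match_cost_splice[of a b m C \<sigma> \<pi> p] by linarith
  with \<pi> \<open>?\<tau> \<in> injections m n\<close> have "?\<tau> \<in> optimal_matchings a b m n p"
    by (simp add: optimal_matchings_def)
  moreover have "y \<in> \<sigma> ` {..<m}" using C(1,5) by blast
  moreover have "target_sum a m \<pi> - target_sum a m ?\<tau> = a (\<pi> i0) - a y"
  proof -
    have "inj_on \<pi> C" "inj_on \<sigma> C"
      using inj C(1) by (auto simp: injections_def intro: inj_on_subset)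
    then have "(\<Sum>i\<in>C. a (\<pi> i)) - (\<Sum>i\<in>C. a (\<sigma> i)) = sum a (\<pi> ` C) - sum a (\<sigma> ` C)"
      by (simp add: sum.reindex)
    also have "\<dots> = a (\<pi> i0) - a y"
      using C(4,5) finite_subset[OF C(1)] by (intro sum_diff_eq_of_singleton_diffs) auto
    finally show ?thesis using target_sum_splice[OF C(1)] by simp
  qed
  ultimately show thesis by (rule that)
qed

lemma exists_index_outside_image:
  assumes "\<pi> \<in> injections m n" "\<sigma> \<in> injections m n"
    and "target_sum a m \<pi> \<noteq> target_sum a m \<sigma>"
  obtains i where "i < m" "\<pi> i \<notin> \<sigma> ` {..<m}"
proof -
  have "card (\<pi> ` {..<m}) = card (\<sigma> ` {..<m})"
    using assms(1,2) by (simp add: injections_def card_image)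
  moreover have "\<pi> ` {..<m} \<noteq> \<sigma> ` {..<m}"
    using assms by (auto simp: target_sum_eq_sum_image)
  ultimately have "\<not> \<pi> ` {..<m} \<subseteq> \<sigma> ` {..<m}"
    using card_subset_eq[of "\<sigma> ` {..<m}" "\<pi> ` {..<m}"] by blast
  then show thesis using that by blast
qed

theorem lemma2:
  fixes a b :: "nat \<Rightarrow> real^2" and m n :: nat
  assumes "inj_on a {..<n}" and "inj_on b {..<m}" and "m \<le> n"
    and "pm_edge a b m n E"
  shows "\<exists>i<n. \<exists>j<n. i \<noteq> j \<and> normal_vector (a j - a i) E"
proof -
  let ?OPT = "optimal_matchings a b m n"
  obtain p where p: "p \<in> E" using assms(4) by (auto simp: pm_edge_def)
  have E: "E = {t. ?OPT t = ?OPT p}"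
    using pm_face_eq assms(4) p by (auto simp: pm_edge_def)
  obtain \<pi> \<sigma> where \<pi>: "\<pi> \<in> ?OPT p" and \<sigma>: "\<sigma> \<in> ?OPT p"
    and "target_sum a m \<pi> \<noteq> target_sum a m \<sigma>"
    using pm_edge_target_sums_differ[OF assms(3,4) p] by blast
  then obtain i0 where i0: "i0 < m" "\<pi> i0 \<notin> \<sigma> ` {..<m}"
    by (auto simp: optimal_matchings_def elim: exists_index_outside_image)
  obtain \<tau> y where \<tau>: "\<tau> \<in> ?OPT p" and y: "y \<in> \<sigma> ` {..<m}"
    and sums: "target_sum a m \<pi> - target_sum a m \<tau> = a (\<pi> i0) - a y"
    using exchange_optimal_matching[OF \<pi> \<sigma> i0] by blast
  have range: "\<pi> i0 < n" "y < n"
    using \<pi> \<sigma> i0 y by (auto simp: optimal_matchings_def injections_def)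
  have distinct: "y \<noteq> \<pi> i0" using i0 y by blast
  have "normal_vector (a (\<pi> i0) - a y) E"
    unfolding normal_vector_def
  proof (intro conjI ballI)
    show "a (\<pi> i0) - a y \<noteq> 0"
      using inj_on_contraD[OF assms(1) distinct] range by simp
    fix s t assume "s \<in> E" "t \<in> E"
    then have "\<pi> \<in> ?OPT s" "\<tau> \<in> ?OPT s" "\<pi> \<in> ?OPT t" "\<tau> \<in> ?OPT t"
      using E \<pi> \<tau> by auto
    then show "(s - t) \<bullet> (a (\<pi> i0) - a y) = 0"
      using match_cost_eq_imp_orthogonal optimal_matchings_cost_eq sums by metis
  qed
  with range distinct show ?thesis by blast
qed

end
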